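(* Let $0\le d\le n-1$ and $x_1<\cdots<x_n$ real, $\mathcal{X}=\{x_1,\dots,x_n\}$. Let $A_{d,n}(\mathcal{X})$ be the $(n-d)\times(n-d)$ matrix with entries $h_r(x_i,x_{i+1},\dots,x_{i+d})$, rows indexed by $0\le r\le n-d-1$ and columns by $1\le i\le n-d$. Then \[\det A_{d,n}(\mathcal{X})=\prod_{\substack{1\le i<j\le n\\ j-i\ge d+1}}(x_j-x_i).\] In particular, $A_{d,n}(\mathcal{X})$ is invertible whenever the $x_r$ are pairwise distinct.
   Context: $h_r$ denotes the complete homogeneous symmetric polynomial of degree $r$ (with $h_0=1$). An empty product equals $1$. *)

theory Defs
  imports Main "Jordan_Normal_Form.Determinant"
begin

definition hcomp :: "nat \<Rightarrow> nat \<Rightarrow> (nat \<Rightarrow> real) \<Rightarrow> real" where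
  "hcomp r d y = (\<Sum>\<alpha> \<in> {\<alpha>. (\<forall>i. d < i \<longrightarrow> \<alpha> i = 0) \<and> (\<Sum>i\<le>d. \<alpha> i) = r}.
                     \<Prod>i\<le>d. y i ^ \<alpha> i)"

text \<open>The (n-d) x (n-d) matrix A_{d,n}(X): row r (0 \<le> r \<le> n-d-1), column i (1 \<le> i \<le> n-d,
  stored at 0-based column index i-1) has entry h_r(x_i, ..., x_{i+d}).\<close>
definition A_mat :: "nat \<Rightarrow> nat \<Rightarrow> (nat \<Rightarrow> real) \<Rightarrow> real mat" where
  "A_mat d n x = mat (n - d) (n - d) (\<lambda>(r, c). hcomp r d (\<lambda>k. x (c + 1 + k)))"

end

theory Submission
  imports Defs
begin

(*
  The two Pascal recursions of h (splitting off the last and the first variable) give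

    h_(r+1)(x_(c+1), ..., x_(c+d+1)) - h_(r+1)(x_c, ..., x_(c+d)) = (x_(c+d+1) - x_c) h_r(x_c, ..., x_(c+d+1)).

  Hence subtracting from every column of A_(d,n) its left neighbour leaves (1, 0, ..., 0) as first
  row (since h_0 = 1) and, below it, the matrix of the same shape for d+1 and one size smaller,
  with column c multiplied by x_(c+d+1) - x_c. Induction on the size collects exactly the factors
  x_j - x_i with j - i >= d+1.
*)

definition monomial_exponents :: "nat \<Rightarrow> nat \<Rightarrow> (nat \<Rightarrow> nat) set" where
  "monomial_exponents k r = {\<alpha>. (\<forall>i\<ge>k. \<alpha> i = 0) \<and> (\<Sum>i<k. \<alpha> i) = r}"

definition complete_hom :: "nat \<Rightarrow> nat \<Rightarrow> (nat \<Rightarrow> 'a::comm_semiring_1) \<Rightarrow> 'a" where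
  "complete_hom k r y = (\<Sum>\<alpha>\<in>monomial_exponents k r. \<Prod>i<k. y i ^ \<alpha> i)"

lemma hcomp_eq_complete_hom: "hcomp r d y = complete_hom (Suc d) r y"
proof -
  have "{\<alpha>. (\<forall>i. d < i \<longrightarrow> \<alpha> i = 0) \<and> (\<Sum>i\<le>d. \<alpha> i) = r} = monomial_exponents (Suc d) r"
    unfolding monomial_exponents_def by (auto simp: lessThan_Suc_atMost Suc_le_eq)
  then show ?thesis
    unfolding hcomp_def complete_hom_def by (simp add: lessThan_Suc_atMost)
qed

lemma monomial_exponents_0: "monomial_exponents 0 r = (if r = 0 then {\<lambda>_. 0} else {})"
  unfolding monomial_exponents_def by auto

lemma monomial_exponents_Suc:
  "monomial_exponents (Suc k) r = (\<Union>j\<le>r. (\<lambda>\<alpha>. \<alpha>(k := j)) ` monomial_exponents k (r - j))"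
proof (intro equalityI subsetI)
  fix \<alpha> assume \<alpha>: "\<alpha> \<in> monomial_exponents (Suc k) r"
  then have sum: "(\<Sum>i<k. \<alpha> i) + \<alpha> k = r"
    unfolding monomial_exponents_def by simp
  then have "\<alpha>(k := 0) \<in> monomial_exponents k (r - \<alpha> k)"
    using \<alpha> unfolding monomial_exponents_def by auto
  moreover have "\<alpha> = (\<alpha>(k := 0))(k := \<alpha> k)" "\<alpha> k \<le> r"
    using sum by auto
  ultimately show "\<alpha> \<in> (\<Union>j\<le>r. (\<lambda>\<alpha>. \<alpha>(k := j)) ` monomial_exponents k (r - j))"
    by blast
next
  fix \<alpha> assume "\<alpha> \<in> (\<Union>j\<le>r. (\<lambda>\<alpha>. \<alpha>(k := j)) ` monomial_exponents k (r - j))"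
  then obtain j \<beta> where "j \<le> r" "\<beta> \<in> monomial_exponents k (r - j)" "\<alpha> = \<beta>(k := j)"
    by auto
  moreover have "(\<Sum>i<k. (\<beta>(k := j)) i) = (\<Sum>i<k. \<beta> i)"
    by (intro sum.cong) auto
  ultimately show "\<alpha> \<in> monomial_exponents (Suc k) r"
    unfolding monomial_exponents_def by auto
qed

lemma finite_monomial_exponents: "finite (monomial_exponents k r)"
  by (induction k arbitrary: r) (simp_all add: monomial_exponents_0 monomial_exponents_Suc)

lemma complete_hom_0: "complete_hom 0 r y = (if r = 0 then 1 else 0)"
  unfolding complete_hom_def monomial_exponents_0 by simp

lemma complete_hom_Suc:
  "complete_hom (Suc k) r y = (\<Sum>j\<le>r. y k ^ j * complete_hom k (r - j) y)"
proof -
  let ?upd = "\<lambda>j \<alpha>. \<alpha>(k := j)"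
  let ?mono = "\<lambda>\<alpha>. \<Prod>i<Suc k. y i ^ \<alpha> i"
  have "complete_hom (Suc k) r y = (\<Sum>j\<le>r. sum ?mono (?upd j ` monomial_exponents k (r - j)))"
    unfolding complete_hom_def monomial_exponents_Suc
    by (rule sum.UNION_disjoint) (simp_all add: finite_monomial_exponents, blast dest: fun_upd_eqD)
  also have "\<dots> = (\<Sum>j\<le>r. y k ^ j * complete_hom k (r - j) y)"
  proof (rule sum.cong[OF refl])
    fix j
    have "inj_on (?upd j) (monomial_exponents k (r - j))"
    proof (rule inj_onI)
      fix \<alpha> \<beta> assume "\<alpha> \<in> monomial_exponents k (r - j)" "\<beta> \<in> monomial_exponents k (r - j)"
        and upd_eq: "\<alpha>(k := j) = \<beta>(k := j)"
      then have "\<alpha> k = 0" "\<beta> k = 0"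
        unfolding monomial_exponents_def by auto
      then have "\<alpha> = (\<alpha>(k := j))(k := 0)" "\<beta> = (\<beta>(k := j))(k := 0)"
        by auto
      then show "\<alpha> = \<beta>"
        unfolding upd_eq by simp
    qed
    then have "sum ?mono (?upd j ` monomial_exponents k (r - j))
        = (\<Sum>\<alpha>\<in>monomial_exponents k (r - j). (\<Prod>i<k. y i ^ \<alpha> i) * y k ^ j)"
      by (simp add: sum.reindex)
    then show "sum ?mono (?upd j ` monomial_exponents k (r - j)) = y k ^ j * complete_hom k (r - j) y"
      unfolding complete_hom_def sum_distrib_left by (simp add: mult.commute)
  qed
  finally show ?thesis .
qed

lemma complete_hom_degree_0 [simp]: "complete_hom k 0 y = 1"
  by (induction k) (simp_all add: complete_hom_0 complete_hom_Suc)

lemma complete_hom_Suc_Suc: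
  "complete_hom (Suc k) (Suc r) y = complete_hom k (Suc r) y + y k * complete_hom (Suc k) r y"
  unfolding complete_hom_Suc[of k "Suc r"] complete_hom_Suc[of k r]
  by (simp del: sum.atMost_Suc add: sum.atMost_Suc_shift sum_distrib_left mult.assoc)

text \<open>Splitting off the first variable; derived from the previous recursion by induction,
  which avoids proving that \<open>h\<^sub>r\<close> is symmetric.\<close>
lemma complete_hom_Suc_Suc_first:
  "complete_hom (Suc k) (Suc r) y
     = complete_hom k (Suc r) (\<lambda>i. y (Suc i)) + y 0 * complete_hom (Suc k) r y"
proof (induction k arbitrary: r)
  case 0
  then show ?case by (simp add: complete_hom_Suc_Suc complete_hom_0)
next
  case (Suc k)
  note first_split = Suc.IH
  let ?h = complete_hom and ?z = "\<lambda>i. y (Suc i)"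
  show ?case
  proof (induction r)
    case 0
    then show ?case
      using first_split[of 0] by (simp add: complete_hom_Suc_Suc[of _ 0] algebra_simps)
  next
    case (Suc r)
    have "?h (Suc (Suc k)) (Suc (Suc r)) y
        = ?h (Suc k) (Suc (Suc r)) y + y (Suc k) * ?h (Suc (Suc k)) (Suc r) y"
      by (rule complete_hom_Suc_Suc)
    also have "\<dots> = ?h k (Suc (Suc r)) ?z + y 0 * ?h (Suc k) (Suc r) y
                     + y (Suc k) * (?h (Suc k) (Suc r) ?z + y 0 * ?h (Suc (Suc k)) r y)"
      using first_split[of "Suc r"] Suc.IH by simp
    also have "\<dots> = ?h (Suc k) (Suc (Suc r)) ?z
                     + y 0 * (?h (Suc k) (Suc r) y + y (Suc k) * ?h (Suc (Suc k)) r y)"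
      using complete_hom_Suc_Suc[of k "Suc r" ?z] by (simp add: algebra_simps)
    also have "\<dots> = ?h (Suc k) (Suc (Suc r)) ?z + y 0 * ?h (Suc (Suc k)) (Suc r) y"
      using complete_hom_Suc_Suc[of "Suc k" r y] by simp
    finally show ?case .
  qed
qed

lemma complete_hom_shift_diff:
  fixes y :: "nat \<Rightarrow> 'a::comm_ring_1"
  shows "complete_hom (Suc k) (Suc r) (\<lambda>i. y (Suc i)) - complete_hom (Suc k) (Suc r) y
           = (y (Suc k) - y 0) * complete_hom (Suc (Suc k)) r y"
proof -
  let ?h = complete_hom and ?z = "\<lambda>i. y (Suc i)"
  have "?h (Suc k) (Suc r) ?z - ?h (Suc k) (Suc r) y
      = y (Suc k) * ?h (Suc k) r ?z - y 0 * ?h (Suc k) r y"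
    using complete_hom_Suc_Suc[of k r ?z] complete_hom_Suc_Suc_first[of k r y] by simp
  also have "\<dots> = (y (Suc k) - y 0) * ?h (Suc (Suc k)) r y"
  proof (cases r)
    case 0
    then show ?thesis by (simp add: algebra_simps)
  next
    case (Suc r')
    let ?H = "?h (Suc (Suc k)) r y" and ?H' = "?h (Suc (Suc k)) r' y"
    have "?H = ?h (Suc k) r y + y (Suc k) * ?H'" "?H = ?h (Suc k) r ?z + y 0 * ?H'"
      using Suc complete_hom_Suc_Suc[of "Suc k" r' y] complete_hom_Suc_Suc_first[of "Suc k" r' y]
      by simp_all
    then have "?h (Suc k) r y = ?H - y (Suc k) * ?H'" "?h (Suc k) r ?z = ?H - y 0 * ?H'"
      by (simp_all add: eq_diff_eq)
    then show ?thesis by (simp only:) (simp add: algebra_simps)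
  qed
  finally show ?thesis .
qed

definition hmatrix :: "nat \<Rightarrow> nat \<Rightarrow> (nat \<Rightarrow> 'a::comm_ring_1) \<Rightarrow> 'a mat" where
  "hmatrix d m x = mat m m (\<lambda>(r, c). complete_hom (Suc d) r (\<lambda>k. x (c + k)))"

lemma hmatrix_carrier [simp]: "hmatrix d m x \<in> carrier_mat m m"
  and dim_row_hmatrix [simp]: "dim_row (hmatrix d m x) = m"
  and dim_col_hmatrix [simp]: "dim_col (hmatrix d m x) = m"
  unfolding hmatrix_def by simp_all

lemma det_scale_columns:
  fixes M :: "'a::comm_ring_1 mat"
  assumes M: "M \<in> carrier_mat n n"
  shows "det (mat n n (\<lambda>(i, j). M $$ (i, j) * f j)) = det M * (\<Prod>j<n. f j)"
proof -
  have "det (mat n n (\<lambda>(i, j). M $$ (i, j) * f j))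
      = (\<Sum>p | p permutes {0..<n}. signof p * (\<Prod>j<n. M $$ (p j, j) * f j))"
    by (subst det_col[of _ n]) (auto intro!: sum.cong prod.cong simp: permutes_in_image)
  also have "\<dots> = det M * (\<Prod>j<n. f j)"
    by (simp add: det_col[OF M] sum_distrib_right prod.distrib mult.assoc)
  finally show ?thesis .
qed

lemma det_hmatrix_Suc:
  "det (hmatrix d (Suc m) x) = det (hmatrix (Suc d) m x) * (\<Prod>c<m. x (c + Suc d) - x c)"
proof -
  let ?A = "hmatrix d (Suc m) x"
  let ?U = "mat (Suc m) (Suc m) (\<lambda>(i, j). if i = j then 1 else if Suc i = j then -1 else 0)"
  define B where "B = ?A * ?U"
  have U: "?U \<in> carrier_mat (Suc m) (Suc m)" by simp
  have det_U: "det ?U = 1"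
    by (subst det_upper_triangular[OF _ U]) (auto simp: upper_triangular_def prod_list_diag_prod)
  have B: "B \<in> carrier_mat (Suc m) (Suc m)"
    unfolding B_def using hmatrix_carrier U by (rule mult_carrier_mat)
  have det_B: "det B = det ?A"
    unfolding B_def det_mult[OF hmatrix_carrier U] det_U by simp
  have B_entry: "B $$ (r, c) = ?A $$ (r, c) - (if c = 0 then 0 else ?A $$ (r, c - 1))"
    if "r < Suc m" "c < Suc m" for r c
  proof -
    have "B $$ (r, c) = (\<Sum>i<Suc m. ?A $$ (r, i) * ?U $$ (i, c))"
      using that by (simp add: B_def scalar_prod_def lessThan_atLeast0)
    also have "\<dots> = (\<Sum>i<Suc m. (if i = c then ?A $$ (r, i) else 0)
                                - (if Suc i = c then ?A $$ (r, i) else 0))"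
      using that by (intro sum.cong) auto
    finally show ?thesis
      using that by (cases c) (auto simp: sum_subtractf)
  qed
  have B_row_0: "B $$ (0, c) = (if c = 0 then 1 else 0)" if "c < Suc m" for c
    using B_entry[of 0 c] that by (simp add: hmatrix_def)
  let ?C = "mat m m (\<lambda>(r, c). hmatrix (Suc d) m x $$ (r, c) * (x (c + Suc d) - x c))"
  have delete_B: "mat_delete B 0 0 = ?C"
  proof (rule eq_matI)
    fix r c assume "r < dim_row ?C" "c < dim_col ?C"
    then show "mat_delete B 0 0 $$ (r, c) = ?C $$ (r, c)"
      using B B_entry[of "Suc r" "Suc c"] complete_hom_shift_diff[of d r "\<lambda>k. x (c + k)"]
      by (simp add: mat_delete_def hmatrix_def mult.commute)
  qed (use B in auto)
  have "det ?A = (\<Sum>j<Suc m. B $$ (0, j) * cofactor B 0 j)"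
    unfolding det_B[symmetric] by (rule laplace_expansion_row[OF B]) simp
  also have "\<dots> = cofactor B 0 0"
    by (subst sum.lessThan_Suc_shift) (simp add: B_row_0)
  also have "\<dots> = det ?C"
    by (simp add: cofactor_def delete_B)
  also have "\<dots> = det (hmatrix (Suc d) m x) * (\<Prod>c<m. x (c + Suc d) - x c)"
    by (rule det_scale_columns) simp
  finally show ?thesis .
qed

lemma det_hmatrix:
  "det (hmatrix d m x) = (\<Prod>(i, j) \<in> {(i, j). i + d < j \<and> j < m + d}. x j - x i)"
proof (induction m arbitrary: d)
  case 0
  have no_pairs: "{(i, j). i + d < j \<and> j < 0 + d} = {}" by auto
  show ?case unfolding hmatrix_def no_pairs by simp
next
  case (Suc m)
  have pairs: "{(i, j). i + d < j \<and> j < Suc m + d}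
      = (\<lambda>c. (c, c + Suc d)) ` {..<m} \<union> {(i, j). i + Suc d < j \<and> j < m + Suc d}"
    by auto
  have "(\<Prod>c<m. x (c + Suc d) - x c) = (\<Prod>(i, j) \<in> (\<lambda>c. (c, c + Suc d)) ` {..<m}. x j - x i)"
    by (subst prod.reindex) (auto simp: inj_on_def)
  moreover have "finite {(i, j). i + Suc d < j \<and> j < m + Suc d}"
    by (rule finite_subset[of _ "{..<m + Suc d} \<times> {..<m + Suc d}"]) auto
  ultimately show ?case
    unfolding det_hmatrix_Suc Suc.IH pairs
    by (subst prod.union_disjoint) (auto simp: mult.commute)
qed

lemma det_non_zero_imp_invertible_mat:
  fixes A :: "'a::field mat"
  assumes A: "A \<in> carrier_mat n n" and det: "det A \<noteq> 0"
  shows "invertible_mat A"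
proof -
  obtain B where "B \<in> carrier_mat n n" "A * B = 1\<^sub>m n" "B * A = 1\<^sub>m n"
    using det_non_zero_imp_unit[OF A det, of "()"] unfolding Units_def ring_mat_def by auto
  then show ?thesis
    using A unfolding invertible_mat_def inverts_mat_def by auto
qed

lemma A_mat_eq_hmatrix: "A_mat d n x = hmatrix d (n - d) (\<lambda>k. x (Suc k))"
  unfolding A_mat_def hmatrix_def hcomp_eq_complete_hom by (intro cong_mat refl) auto

lemma det_A_mat:
  "det (A_mat d n x) = (\<Prod>(i, j) \<in> {(i, j). 1 \<le> i \<and> i < j \<and> j \<le> n \<and> d + 1 \<le> j - i}. x j - x i)"
proof -
  let ?P = "{(i, j). 1 \<le> i \<and> i < j \<and> j \<le> n \<and> d + 1 \<le> j - i}"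
  let ?Q = "{(i, j). i + d < j \<and> j < n - d + d}"
  have "?P = (\<lambda>(i, j). (Suc i, Suc j)) ` ?Q"
  proof (intro equalityI subsetI)
    fix p assume "p \<in> ?P"
    then obtain i j where "p = (i, j)" "1 \<le> i" "i < j" "j \<le> n" "d + 1 \<le> j - i"
      by auto
    then have "(i - 1, j - 1) \<in> ?Q" "p = (\<lambda>(i, j). (Suc i, Suc j)) (i - 1, j - 1)"
      by auto
    then show "p \<in> (\<lambda>(i, j). (Suc i, Suc j)) ` ?Q"
      by blast
  qed auto
  then show ?thesis
    unfolding A_mat_eq_hmatrix det_hmatrix by (simp add: prod.reindex inj_on_def case_prod_beta)
qed

lemma invertible_A_mat:
  assumes "inj_on x {1..n}"
  shows "invertible_mat (A_mat d n x)"
proof (rule det_non_zero_imp_invertible_mat)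
  show "A_mat d n x \<in> carrier_mat (n - d) (n - d)"
    unfolding A_mat_def by simp
  have "finite {(i, j). 1 \<le> i \<and> i < j \<and> j \<le> n \<and> d + 1 \<le> j - i}"
    by (rule finite_subset[of _ "{..n} \<times> {..n}"]) auto
  moreover have "x j \<noteq> x i" if "1 \<le> i" "i < j" "j \<le> n" for i j
    using assms that unfolding inj_on_def by fastforce
  ultimately show "det (A_mat d n x) \<noteq> 0"
    unfolding det_A_mat by (auto simp: prod_zero_iff)
qed

theorem proposition2p11:
  fixes d n :: nat and x :: "nat \<Rightarrow> real"
  assumes "d \<le> n - 1" and "1 \<le> n"
  shows "(strict_mono_on {1..n} x \<longrightarrow>
           det (A_mat d n x) = (\<Prod>(i, j) \<in> {(i, j). 1 \<le> i \<and> i < j \<and> j \<le> n \<and> d + 1 \<le> j - i}. x j - x i))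
       \<and> (inj_on x {1..n} \<longrightarrow> invertible_mat (A_mat d n x))"
  using det_A_mat invertible_A_mat by blast

end
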